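(* Let $\alpha\ge4$, let $N_2=\{i_1,\dots,i_v\}$ be a finite set with reals $y'_i\in[\frac{\alpha-1}{\alpha},1)$ and weights $w_i\ge0$ ordered so that $w_{i_1}\le w_{i_2}\le\dots\le w_{i_v}$, and suppose $Y:=\sum_{i\in N_2}y'_i\le v-1$. Run the procedure below producing $\hat y$. Then: (i) the procedure terminates at some $r>1$; (ii) every $\hat y_i$ ($i\in N_2$) satisfies $\hat y_i=1$ or $\frac{\alpha-2}{\alpha}<\hat y_i\le\frac{\alpha-1}{\alpha}$, and $\hat y_i=\frac{\alpha-1}{\alpha}$ or $\hat y_i=1$ for every $i\ne i_1$ (so at most one $i$ has $\frac{\alpha-2}{\alpha}<\hat y_i<\frac{\alpha-1}{\alpha}$); (iii) $\sum_{i\in N_2}\hat y_i=\sum_{i\in N_2}y'_i$; (iv) $\sum_{i\in N_2}(1-\hat y_i)w_i\le\sum_{i\in N_2}(1-y'_i)w_i$.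
   Context: Procedure: initially set $\hat y_i=\frac{\alpha-1}{\alpha}$ for all $i\in N_2$ and $Y'=Y-\sum_{i\in N_2}\hat y_i$. For $r=v,v-1,\dots,1$: if $Y'=0$, terminate; if $Y'>0$ and $Y'+\hat y_{i_r}<1$, set $\hat y_{i_1}\leftarrow\hat y_{i_1}-(1-Y'-\hat y_{i_r})$ and $\hat y_{i_r}\leftarrow1$, and terminate; if $Y'>0$ and $Y'+\hat y_{i_r}\ge1$, set $\hat y_{i_r}\leftarrow1$ and update $Y'\leftarrow Y-\sum_{i\in N_2}\hat y_i$. (In the paper $w_i=d'_ic_{s(i)i}$, but the statement holds for arbitrary nonnegative weights.) *)

theory Defs
  imports Complex_Main
begin

text \<open>N_2 = {i_1,...,i_v} is indexed as {1..v}, i.e. i_r = r.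
  proc Y v r yh runs the loop of the procedure for r, r-1, ..., 1 on the current
  vector yh.  It returns the final vector and Some r if the procedure
  terminates in iteration r, or None if the loop runs out (or the unspecified
  case Y' < 0 is reached).\<close>

fun proc :: "real \<Rightarrow> nat \<Rightarrow> nat \<Rightarrow> (nat \<Rightarrow> real) \<Rightarrow> (nat \<Rightarrow> real) \<times> nat option" where
  "proc Y v 0 yh = (yh, None)"
| "proc Y v (Suc k) yh =
     (let r = Suc k; Yp = Y - (\<Sum>i\<in>{1..v}. yh i) in
      if Yp = 0 then (yh, Some r)
      else if Yp > 0 \<and> Yp + yh r < 1
        then ((yh(1 := yh 1 - (1 - Yp - yh r)))(r := 1), Some r)
      else if Yp > 0 \<and> Yp + yh r \<ge> 1
        then proc Y v k (yh(r := 1))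
      else (yh, None))"

definition run_procedure :: "real \<Rightarrow> nat \<Rightarrow> (nat \<Rightarrow> real) \<Rightarrow> (nat \<Rightarrow> real) \<times> nat option" where
  "run_procedure \<alpha> v y' = proc (\<Sum>i\<in>{1..v}. y' i) v v (\<lambda>i. (\<alpha> - 1) / \<alpha>)"

end

theory Submission
  imports Defs
begin

text \<open>
  Write a = (\<alpha>-1)/\<alpha>, so 0 < a < 1 and (\<alpha>-2)/\<alpha> = 2a-1.  At the start of
  loop iteration k the current vector is a "loop state": a on {1..k}, 1 on {k+1..v}.  Its
  total is then v - k + k a, and as long as this total is at most Y \<le> v - 1 we must have
  k \<ge> 2.  Hence the loop never runs out: by induction over k it stops in some iteration
  r \<ge> 2, either because Y' = 0 or through the correcting step that lowers entry 1, and in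
  both cases the output has "final shape" (1 above r, a strictly between 1 and r, a or 1
  at r, a value in (2a-1, a] at 1) and total Y.  This gives (i)--(iii).  Claim (iv)
  follows from a general exchange lemma: the output lies below y' before the pivot r and
  above y' after it, the totals agree and the weights increase, so the weighted deficit
  \<Sum>(1 - \<cdot>) w cannot increase.
\<close>

lemma sum_fun_upd:
  fixes f :: "'a \<Rightarrow> 'b::ab_group_add"
  assumes "finite A" "x \<in> A"
  shows "sum (f(x := c)) A = sum f A - f x + c"
proof -
  have "sum (f(x := c)) A = c + sum (f(x := c)) (A - {x})"
    using sum.remove[OF assms, of "f(x := c)"] by simp
  also have "sum (f(x := c)) (A - {x}) = sum f (A - {x})"
    by (rule sum.cong) auto
  also have "sum f (A - {x}) = sum f A - f x"
    using sum.remove[OF assms, of f] by simp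
  finally show ?thesis by simp
qed

definition loop_state :: "real \<Rightarrow> nat \<Rightarrow> nat \<Rightarrow> (nat \<Rightarrow> real) \<Rightarrow> bool" where
  "loop_state a v k yh \<longleftrightarrow>
     (\<forall>i. 1 \<le> i \<and> i \<le> k \<longrightarrow> yh i = a) \<and> (\<forall>i. k < i \<and> i \<le> v \<longrightarrow> yh i = 1)"

lemma loop_state_sum:
  assumes "k \<le> v" "loop_state a v k yh"
  shows "(\<Sum>i\<in>{1..v}. yh i) = real (v - k) + real k * a"
proof -
  have split: "{1..v} = {1..k} \<union> {Suc k..v}" "{1..k} \<inter> {Suc k..v} = {}"
    using assms(1) by auto
  have "(\<Sum>i\<in>{1..k}. yh i) = (\<Sum>i\<in>{1..k}. a)"
    using assms(2) unfolding loop_state_def by (intro sum.cong) auto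
  moreover have "(\<Sum>i\<in>{Suc k..v}. yh i) = (\<Sum>i\<in>{Suc k..v}. 1)"
    using assms(2) unfolding loop_state_def by (intro sum.cong) auto
  ultimately show ?thesis
    unfolding split(1) by (simp add: sum.union_disjoint split(2))
qed

lemma loop_state_step:
  assumes "loop_state a v (Suc k) yh"
  shows "loop_state a v k (yh(Suc k := 1))"
  using assms unfolding loop_state_def by auto

definition final_shape :: "real \<Rightarrow> nat \<Rightarrow> nat \<Rightarrow> (nat \<Rightarrow> real) \<Rightarrow> bool" where
  "final_shape a v r yh \<longleftrightarrow>
     (\<forall>i. r < i \<and> i \<le> v \<longrightarrow> yh i = 1) \<and> (\<forall>i. 2 \<le> i \<and> i < r \<longrightarrow> yh i = a) \<and>
     (yh r = a \<or> yh r = 1) \<and> 2 * a - 1 < yh 1 \<and> yh 1 \<le> a"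

text \<open>Since Y \<le> v - 1 and a > 0, a loop state whose total does not exceed Y still has at
  least two entries equal to a: the loop never reaches iteration 1 or runs out.\<close>

lemma loop_state_index_ge_2:
  fixes a Y :: real
  assumes "0 < a" "k \<le> v" "loop_state a v k yh"
    and "(\<Sum>i\<in>{1..v}. yh i) \<le> Y" "Y \<le> real v - 1"
  shows "2 \<le> k"
proof (rule ccontr)
  assume "\<not> 2 \<le> k"
  then consider "k = 0" | "k = 1" by linarith
  moreover have "real (v - k) + real k * a \<le> real v - 1"
    using loop_state_sum[OF assms(2,3)] assms(4,5) by linarith
  ultimately show False using assms(1,2) by cases (simp_all add: of_nat_diff)
qed

lemma loop_state_final_shape:
  assumes "a < 1" "2 \<le> r" "loop_state a v r yh"
  shows "final_shape a v r yh"
  using assms unfolding loop_state_def final_shape_def by auto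

lemma correction_step:
  fixes a Yp :: real
  assumes "0 < Yp" "Yp + a < 1" "2 \<le> r" "r \<le> v" "loop_state a v r yh"
  defines "yh' \<equiv> (yh(1 := a - (1 - Yp - a)))(r := 1)"
  shows "final_shape a v r yh'" and "(\<Sum>i\<in>{1..v}. yh' i) = (\<Sum>i\<in>{1..v}. yh i) + Yp"
proof -
  have r1: "r \<noteq> 1" and r_in: "r \<in> {1..v}" using assms(3,4) by auto
  have y1: "yh 1 = a" and yr: "yh r = a"
    using assms(3,5) unfolding loop_state_def by auto
  show "final_shape a v r yh'"
    using assms(1-3,5) r1 unfolding yh'_def final_shape_def loop_state_def by auto
  define c where "c = a - (1 - Yp - a)"
  have "(\<Sum>i\<in>{1..v}. yh' i) = (\<Sum>i\<in>{1..v}. (yh(1 := c)) i) - a + 1"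
    unfolding yh'_def c_def[symmetric]
    using sum_fun_upd[of "{1..v}" r "yh(1 := c)" 1] r_in r1 yr by simp
  also have "(\<Sum>i\<in>{1..v}. (yh(1 := c)) i) = (\<Sum>i\<in>{1..v}. yh i) - a + c"
    using sum_fun_upd[of "{1..v}" 1 yh c] y1 r_in by simp
  finally show "(\<Sum>i\<in>{1..v}. yh' i) = (\<Sum>i\<in>{1..v}. yh i) + Yp"
    unfolding c_def by simp
qed

lemma proc_correct:
  fixes a Y :: real
  assumes a: "0 < a" "a < 1"
    and Y: "Y \<le> real v - 1"
  shows "k \<le> v \<Longrightarrow> loop_state a v k yh \<Longrightarrow> (\<Sum>i\<in>{1..v}. yh i) \<le> Y \<Longrightarrow>
    proc Y v k yh = (yh', t) \<Longrightarrow>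
    \<exists>r. t = Some r \<and> 2 \<le> r \<and> r \<le> k \<and> final_shape a v r yh' \<and> (\<Sum>i\<in>{1..v}. yh' i) = Y"
proof (induction k arbitrary: yh)
  case 0
  text \<open>Impossible: a loop state at index 0 has total v > Y.\<close>
  then show ?case using loop_state_index_ge_2[OF a(1) _ _ _ Y] by fastforce
next
  case (Suc k)
  define r where "r = Suc k"
  define Yp where "Yp = Y - (\<Sum>i\<in>{1..v}. yh i)"
  have state: "loop_state a v r yh" and run: "proc Y v r yh = (yh', t)" and rv: "r \<le> v"
    using Suc.prems r_def by simp_all
  have r2: "2 \<le> r" using loop_state_index_ge_2[OF a(1) rv state Suc.prems(3) Y] .
  have yr: "yh r = a" using state unfolding loop_state_def by (simp add: r_def)
  have unfold: "proc Y v r yh = (if Yp = 0 then (yh, Some r)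
      else if Yp > 0 \<and> Yp + a < 1 then ((yh(1 := a - (1 - Yp - a)))(r := 1), Some r)
      else if Yp > 0 \<and> Yp + a \<ge> 1 then proc Y v k (yh(r := 1))
      else (yh, None))"
    using state yr unfolding loop_state_def by (simp add: Yp_def r_def Let_def)
  consider "Yp = 0" | "Yp > 0" "Yp + a < 1" | "Yp > 0" "Yp + a \<ge> 1"
    using Suc.prems(3) Yp_def by fastforce
  then show ?case
  proof cases
    case 1
    then have "yh' = yh" "t = Some r" using run unfold by auto
    then show ?thesis
      using loop_state_final_shape[OF a(2) r2 state] r2 1 Yp_def unfolding r_def by auto
  next
    case 2
    then have out: "yh' = (yh(1 := a - (1 - Yp - a)))(r := 1)" "t = Some r"
      using run unfold by auto
    have "final_shape a v r yh'" "(\<Sum>i\<in>{1..v}. yh' i) = Y"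
      using correction_step[OF 2 r2 rv state] Yp_def unfolding out(1) by simp_all
    then show ?thesis using out(2) r2 unfolding r_def by blast
  next
    case 3
    have rec: "proc Y v k (yh(r := 1)) = (yh', t)" using unfold run 3 by auto
    have "(\<Sum>i\<in>{1..v}. (yh(r := 1)) i) = (\<Sum>i\<in>{1..v}. yh i) - a + 1"
      using sum_fun_upd[of "{1..v}" r yh 1] rv r2 yr by simp
    then have "(\<Sum>i\<in>{1..v}. (yh(r := 1)) i) \<le> Y" using 3 Yp_def by linarith
    from Suc.IH[OF _ loop_state_step[OF Suc.prems(2)] _ rec[unfolded r_def]] this Suc.prems(1)
    show ?thesis unfolding r_def by fastforce
  qed
qed

lemma final_shape_values:
  assumes "a < 1" "final_shape a v r yh" "i \<in> {1..v}"
  shows "i \<noteq> 1 \<Longrightarrow> yh i = a \<or> yh i = 1"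
    and "yh i = 1 \<or> (2 * a - 1 < yh i \<and> yh i \<le> a)"
proof -
  show other: "yh i = a \<or> yh i = 1" if "i \<noteq> 1"
    using assms(2,3) that unfolding final_shape_def by (cases i r rule: linorder_cases) auto
  show "yh i = 1 \<or> (2 * a - 1 < yh i \<and> yh i \<le> a)"
  proof (cases "i = 1")
    case True
    then show ?thesis using assms(2) unfolding final_shape_def by simp
  next
    case False
    then show ?thesis using other assms(1) by fastforce
  qed
qed

lemma final_shape_pivot:
  assumes "final_shape a v r yh" "2 \<le> r" "\<And>i. i \<in> {1..v} \<Longrightarrow> a \<le> y' i \<and> y' i < 1"
  shows "\<And>i. 1 \<le> i \<Longrightarrow> i < r \<Longrightarrow> i \<le> v \<Longrightarrow> yh i \<le> y' i"
    and "\<And>i. r < i \<Longrightarrow> i \<le> v \<Longrightarrow> y' i \<le> yh i"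
proof -
  show "yh i \<le> y' i" if "1 \<le> i" "i < r" "i \<le> v" for i
    using assms(1) assms(3)[of i] that unfolding final_shape_def by (cases "i = 1") auto
  show "y' i \<le> yh i" if "r < i" "i \<le> v" for i
    using assms(1,2) assms(3)[of i] that unfolding final_shape_def by auto
qed

text \<open>No sign condition on w is needed.\<close>

lemma weighted_deficit_exchange:
  fixes y z w :: "nat \<Rightarrow> real"
  assumes "r \<in> {1..v}"
    and below: "\<And>i. 1 \<le> i \<Longrightarrow> i < r \<Longrightarrow> z i \<le> y i"
    and above: "\<And>i. r < i \<Longrightarrow> i \<le> v \<Longrightarrow> y i \<le> z i"
    and mono: "\<And>i j. 1 \<le> i \<Longrightarrow> i \<le> j \<Longrightarrow> j \<le> v \<Longrightarrow> w i \<le> w j"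
    and total: "(\<Sum>i\<in>{1..v}. z i) = (\<Sum>i\<in>{1..v}. y i)"
  shows "(\<Sum>i\<in>{1..v}. (1 - z i) * w i) \<le> (\<Sum>i\<in>{1..v}. (1 - y i) * w i)"
proof -
  have termwise: "(y i - z i) * w i \<le> (y i - z i) * w r" if i: "i \<in> {1..v}" for i
  proof (cases i r rule: linorder_cases)
    case less
    then show ?thesis
      using below[of i] mono[of i r] i assms(1) by (simp add: mult_left_mono)
  next
    case greater
    then show ?thesis
      using above[of i] mono[of r i] i assms(1) by (simp add: mult_left_mono_neg)
  qed simp
  have "(\<Sum>i\<in>{1..v}. (1 - z i) * w i) - (\<Sum>i\<in>{1..v}. (1 - y i) * w i)
      = (\<Sum>i\<in>{1..v}. (y i - z i) * w i)"
    by (simp add: sum_subtractf[symmetric] algebra_simps)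
  also have "\<dots> \<le> (\<Sum>i\<in>{1..v}. (y i - z i) * w r)"
    using termwise by (intro sum_mono) auto
  also have "\<dots> = ((\<Sum>i\<in>{1..v}. y i) - (\<Sum>i\<in>{1..v}. z i)) * w r"
    by (simp add: sum_distrib_right[symmetric] sum_subtractf)
  also have "\<dots> = 0" using total by simp
  finally show ?thesis by simp
qed

theorem lemma7:
  fixes \<alpha> :: real and v :: nat and y' w :: "nat \<Rightarrow> real"
  assumes "\<alpha> \<ge> 4"
    and "\<And>i. i \<in> {1..v} \<Longrightarrow> (\<alpha> - 1) / \<alpha> \<le> y' i \<and> y' i < 1"
    and "\<And>i. i \<in> {1..v} \<Longrightarrow> w i \<ge> 0"
    and "\<And>i j. 1 \<le> i \<Longrightarrow> i \<le> j \<Longrightarrow> j \<le> v \<Longrightarrow> w i \<le> w j"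
    and "(\<Sum>i\<in>{1..v}. y' i) \<le> real v - 1"
    and "run_procedure \<alpha> v y' = (yh, t)"
  shows "(\<exists>r. t = Some r \<and> r > 1) \<and>
    (\<forall>i\<in>{1..v}. yh i = 1 \<or> ((\<alpha> - 2) / \<alpha> < yh i \<and> yh i \<le> (\<alpha> - 1) / \<alpha>)) \<and>
    (\<forall>i\<in>{1..v}. i \<noteq> 1 \<longrightarrow> yh i = (\<alpha> - 1) / \<alpha> \<or> yh i = 1) \<and>
    ((\<Sum>i\<in>{1..v}. yh i) = (\<Sum>i\<in>{1..v}. y' i)) \<and>
    ((\<Sum>i\<in>{1..v}. (1 - yh i) * w i) \<le> (\<Sum>i\<in>{1..v}. (1 - y' i) * w i))"
proof -
  define a where "a = (\<alpha> - 1) / \<alpha>"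
  have a: "0 < a" "a < 1" and a2: "(\<alpha> - 2) / \<alpha> = 2 * a - 1"
    using assms(1) unfolding a_def by (auto simp: field_simps)
  have ya: "\<And>i. i \<in> {1..v} \<Longrightarrow> a \<le> y' i \<and> y' i < 1" using assms(2) a_def by auto
  have "(\<Sum>i\<in>{1..v}. a) \<le> (\<Sum>i\<in>{1..v}. y' i)" using ya by (intro sum_mono) auto
  moreover have "loop_state a v v (\<lambda>_. a)" by (simp add: loop_state_def)
  moreover have "proc (\<Sum>i\<in>{1..v}. y' i) v v (\<lambda>_. a) = (yh, t)"
    using assms(6) unfolding run_procedure_def a_def .
  ultimately obtain r where r: "t = Some r" "2 \<le> r" "r \<le> v" "final_shape a v r yh"
      and total: "(\<Sum>i\<in>{1..v}. yh i) = (\<Sum>i\<in>{1..v}. y' i)"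
    using proc_correct[OF a assms(5)] by fastforce
  have "(\<Sum>i\<in>{1..v}. (1 - yh i) * w i) \<le> (\<Sum>i\<in>{1..v}. (1 - y' i) * w i)"
  proof (rule weighted_deficit_exchange[OF _ _ _ assms(4) total])
    show "r \<in> {1..v}" using r by simp
    show "yh i \<le> y' i" if "1 \<le> i" "i < r" for i
      using that r(3) by (intro final_shape_pivot(1)[OF r(4,2)]) (auto simp: ya)
    show "y' i \<le> yh i" if "r < i" "i \<le> v" for i
      using that by (intro final_shape_pivot(2)[OF r(4,2)]) (auto simp: ya)
  qed
  then show ?thesis
    using r(1,2) total final_shape_values[OF a(2) r(4)] unfolding a2 a_def by auto
qed
end
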